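(* Let $\sigma,\lambda,\psi>0$, $0<\beta<1$, $\mu>0$. Consider the model $x_t=\hat E_t x_{t+1}-\sigma(i_t-\hat E_t\pi_{t+1})+\epsilon_t$, $\pi_t=\lambda x_t+\beta\hat E_t\pi_{t+1}$, $i_t=\max\{\psi\pi_t,-\mu\}$, where expectations are formed by the learning rule $\hat E_t Y_{t+j}=Y^e_t$ with $Y^e_t=Y^e_{t-1}+t^{-1}(Y_{t-1}-Y^e_{t-1})$, $Y_t=(x_t,\pi_t)'$ (so $Y^e_t$ is determined by data up to date $t-1$). Then the model is coherent and complete: at every date $t$, for every value of the predetermined forecast $Y^e_t\in\mathbb{R}^2$ and every value of the shock $\epsilon_t\in\mathbb{R}$, there exists exactly one $(x_t,\pi_t)\in\mathbb{R}^2$ solving the three equations.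
   Context: $x_t$ is the output gap, $\pi_t$ inflation, $i_t$ the nominal interest rate, $\epsilon_t$ an exogenous demand shock. Agents observe endogenous variables only with a one-period lag (lagged information), so the forecast $Y^e_t$ is taken as given when solving for date-$t$ outcomes. *)

theory Defs
  imports Complex_Main
begin

text \<open>Date-t equations of the model, given the predetermined forecast
  (xe, pie) = Y^e_t (used for both E_t x_{t+1} and E_t pi_{t+1}) and shock eps.\<close>
definition model_eqs ::
  "real \<Rightarrow> real \<Rightarrow> real \<Rightarrow> real \<Rightarrow> real \<Rightarrow> real \<Rightarrow> real \<Rightarrow> real \<Rightarrow> real \<Rightarrow> real \<Rightarrow> real \<Rightarrow> bool" where
  "model_eqs \<sigma> lam \<beta> \<psi> \<mu> xe pie eps x p i \<longleftrightarrow>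
     x = xe - \<sigma> * (i - pie) + eps \<and>
     p = lam * x + \<beta> * pie \<and>
     i = max (\<psi> * p) (- \<mu>)"

end

theory Submission
  imports Defs
begin

text \<open>Eliminating the output gap and the interest rate, the date-t system reduces to the
  scalar equation p + \<sigma> lam max (\<psi> p) (-\<mu>) = A in inflation alone. Its left-hand side is
  piecewise linear with slopes 1 and 1 + \<sigma> lam \<psi>, hence strictly increasing and onto, so
  the equation has exactly one root, and that root determines x and i.\<close>

lemma strict_mono_plus_scaled_max_linear:
  fixes c \<psi> \<mu> :: real
  assumes "c \<ge> 0" and "\<psi> \<ge> 0"
  shows "strict_mono (\<lambda>p. p + c * max (\<psi> * p) (- \<mu>))"
proof (rule strict_monoI)
  fix p q :: real
  assume "p < q"
  with \<open>\<psi> \<ge> 0\<close> have "max (\<psi> * p) (- \<mu>) \<le> max (\<psi> * q) (- \<mu>)"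
    by (intro max.mono mult_left_mono) auto
  with \<open>c \<ge> 0\<close> \<open>p < q\<close> show "p + c * max (\<psi> * p) (- \<mu>) < q + c * max (\<psi> * q) (- \<mu>)"
    by (intro add_less_le_mono mult_left_mono)
qed

lemma ex_root_plus_scaled_max_linear:
  fixes c \<psi> \<mu> A :: real
  assumes "c \<ge> 0" and "\<psi> \<ge> 0"
  shows "\<exists>p. p + c * max (\<psi> * p) (- \<mu>) = A"
proof -
  define d where "d = 1 + c * \<psi>"
  have "d > 0"
    using assms by (simp add: d_def add_pos_nonneg)
  show ?thesis
  proof (cases "\<psi> * (A / d) \<ge> - \<mu>")
    case True
    have "A / d + c * (\<psi> * (A / d)) = A / d * d"
      by (simp add: d_def algebra_simps add_divide_distrib)
    with True \<open>d > 0\<close> have "A / d + c * max (\<psi> * (A / d)) (- \<mu>) = A"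
      by simp
    then show ?thesis ..
  next
    case False
    with \<open>d > 0\<close> have "\<psi> * A < - \<mu> * d"
      by (simp add: not_le pos_divide_less_eq mult.commute)
    then have "\<psi> * (A + c * \<mu>) < - \<mu>"
      by (simp add: d_def algebra_simps)
    then have "(A + c * \<mu>) + c * max (\<psi> * (A + c * \<mu>)) (- \<mu>) = A"
      by simp
    then show ?thesis ..
  qed
qed

lemma ex1_root_plus_scaled_max_linear:
  fixes c \<psi> \<mu> A :: real
  assumes "c \<ge> 0" and "\<psi> \<ge> 0"
  shows "\<exists>!p. p + c * max (\<psi> * p) (- \<mu>) = A"
  using ex_root_plus_scaled_max_linear[OF assms]
    strict_mono_eq[OF strict_mono_plus_scaled_max_linear[OF assms]]
  by metis

lemma model_eqs_iff_inflation_equation: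
  "model_eqs \<sigma> lam \<beta> \<psi> \<mu> xe pie eps x p i \<longleftrightarrow>
     i = max (\<psi> * p) (- \<mu>) \<and>
     x = xe - \<sigma> * (i - pie) + eps \<and>
     p + lam * \<sigma> * i = lam * (xe + \<sigma> * pie + eps) + \<beta> * pie"
proof -
  have "p = lam * x + \<beta> * pie \<longleftrightarrow>
      p + lam * \<sigma> * i = lam * (xe + \<sigma> * pie + eps) + \<beta> * pie"
    if "x = xe - \<sigma> * (i - pie) + eps"
    using that by (simp add: ring_distribs) linarith
  then show ?thesis
    unfolding model_eqs_def by blast
qed

theorem proposition2:
  fixes \<sigma> lam \<beta> \<psi> \<mu> :: real
  assumes "\<sigma> > 0" and "lam > 0" and "\<psi> > 0" and "0 < \<beta>" and "\<beta> < 1" and "\<mu> > 0"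
  shows "\<forall>xe pie eps :: real.
           \<exists>!xp :: real \<times> real. \<exists>i. model_eqs \<sigma> lam \<beta> \<psi> \<mu> xe pie eps (fst xp) (snd xp) i"
proof (intro allI)
  fix xe pie eps :: real
  let ?A = "lam * (xe + \<sigma> * pie + eps) + \<beta> * pie"
  let ?i = "\<lambda>p. max (\<psi> * p) (- \<mu>)"
  have "lam * \<sigma> \<ge> 0" and "\<psi> \<ge> 0"
    using assms by simp_all
  then obtain p where p: "p + lam * \<sigma> * ?i p = ?A"
    and p_unique: "\<And>q. q + lam * \<sigma> * ?i q = ?A \<Longrightarrow> q = p"
    using ex1_root_plus_scaled_max_linear by metis
  let ?x = "xe - \<sigma> * (?i p - pie) + eps"
  show "\<exists>!xp. \<exists>i. model_eqs \<sigma> lam \<beta> \<psi> \<mu> xe pie eps (fst xp) (snd xp) i"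
  proof (rule ex1I[of _ "(?x, p)"])
    show "\<exists>i. model_eqs \<sigma> lam \<beta> \<psi> \<mu> xe pie eps (fst (?x, p)) (snd (?x, p)) i"
      using p by (simp add: model_eqs_iff_inflation_equation)
  next
    fix xp :: "real \<times> real"
    assume "\<exists>i. model_eqs \<sigma> lam \<beta> \<psi> \<mu> xe pie eps (fst xp) (snd xp) i"
    then show "xp = (?x, p)"
      using p_unique by (cases xp) (auto simp: model_eqs_iff_inflation_equation)
  qed
qed

end
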